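(* Let $q$ be a power of an odd prime, and let $\theta\in\mathbb{F}_{q^2}\setminus\mathbb{F}_q$ satisfy $\theta^2=\mu_1\theta+\mu_0$ with $\mu_0,\mu_1\in\mathbb{F}_q$. Let \[ X=\{(s_0+s_1\theta,\ t_0+(4s_1s_0+2s_1^2\mu_1)\theta):s_0,s_1,t_0\in\mathbb{F}_q\}\subset\mathbb{F}_{q^2}^2. \] Then the induced subgraph $G_{q^2}[X]$ has maximum degree at most $2q-1$.
   Context: For a power $Q$ of an odd prime, the graph $G_Q$ has vertex set $\mathbb{F}_Q\times\mathbb{F}_Q$, and distinct vertices $(x_1,x_2)$, $(y_1,y_2)$ are adjacent if and only if $(x_1+y_1)^2=x_2+y_2$; $G_Q$ has no loops. *)

theory Defs
  imports Main "HOL-Computational_Algebra.Primes"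
begin

definition G_adj :: "('a::field \<times> 'a) \<Rightarrow> ('a \<times> 'a) \<Rightarrow> bool" where
  "G_adj x y \<longleftrightarrow> x \<noteq> y \<and> (fst x + fst y)^2 = snd x + snd y"

definition induced_degree :: "('a::field \<times> 'a) set \<Rightarrow> ('a \<times> 'a) \<Rightarrow> nat" where
  "induced_degree X v = card {w \<in> X. G_adj v w}"

definition is_subfield :: "'a::field set \<Rightarrow> bool" where
  "is_subfield K \<longleftrightarrow> 0 \<in> K \<and> 1 \<in> K \<and> (\<forall>x\<in>K. \<forall>y\<in>K. x + y \<in> K \<and> x * y \<in> K)
     \<and> (\<forall>x\<in>K. - x \<in> K) \<and> (\<forall>x\<in>K. x \<noteq> 0 \<longrightarrow> inverse x \<in> K)"

definition X_set :: "'a::field set \<Rightarrow> 'a \<Rightarrow> 'a \<Rightarrow> ('a \<times> 'a) set" where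
  "X_set K \<theta> \<mu>1 = {(s0 + s1 * \<theta>, t0 + (4 * s1 * s0 + 2 * s1^2 * \<mu>1) * \<theta>) | s0 s1 t0.
       s0 \<in> K \<and> s1 \<in> K \<and> t0 \<in> K}"

end

theory Submission
  imports Defs "HOL-Number_Theory.Residues"
begin

(* Write every element of F_{q^2} uniquely as x0 + x1*theta with x0, x1 in F_q, and let
   pt(s0,s1,t0) be the point of X with parameters s0, s1, t0.  Squaring in this basis
   (using theta^2 = mu1*theta + mu0) and comparing coordinates, pt(a0,a1,b0) ~ pt(s0,s1,t0)
   forces
     (i)  t0 = (a0+s0)^2 + mu0*(a1+s1)^2 - b0, and
     (ii) (a1 - s1) * (2*(a0 - s0) + mu1*(a1 - s1)) = 0.
   So a neighbour is determined by (s0,s1), and (s0,s1) lies on one of two lines of F_q^2,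
   {s1 = a1} or {s0 = a0 + mu1*(a1 - s1)/2}; both have q points and share (a0,a1), giving
   at most 2q - 1 neighbours. *)

lemma two_neq_zero_if_odd_card:
  assumes "odd (card (UNIV :: 'a::{field,finite} set))"
  shows "(2::'a) \<noteq> 0"
proof
  assume "(2::'a) = 0"
  then have "CHAR('a) dvd 2"
    using of_nat_eq_0_iff_char_dvd[where 'a='a, of 2] by simp
  moreover have "CHAR('a) dvd card (UNIV :: 'a set)" by (rule CHAR_dvd_CARD)
  ultimately have "CHAR('a) dvd gcd 2 (card (UNIV :: 'a set))" by simp
  also have "gcd 2 (card (UNIV :: 'a set)) = 1" using assms by simp
  finally show False by simp
qed

lemma subfield_closed:
  assumes "is_subfield K"
  shows "0 \<in> K" "1 \<in> K"
    and "x \<in> K \<Longrightarrow> y \<in> K \<Longrightarrow> x + y \<in> K" "x \<in> K \<Longrightarrow> y \<in> K \<Longrightarrow> x * y \<in> K"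
    and "x \<in> K \<Longrightarrow> - x \<in> K" "x \<in> K \<Longrightarrow> y \<in> K \<Longrightarrow> x - y \<in> K"
    and "x \<in> K \<Longrightarrow> y \<in> K \<Longrightarrow> x / y \<in> K" "x \<in> K \<Longrightarrow> x ^ n \<in> K"
    and "numeral m \<in> K"
proof -
  show K0: "0 \<in> K" and K1: "1 \<in> K" using assms unfolding is_subfield_def by auto
  show Kadd: "x \<in> K \<Longrightarrow> y \<in> K \<Longrightarrow> x + y \<in> K" and Kmult: "x \<in> K \<Longrightarrow> y \<in> K \<Longrightarrow> x * y \<in> K"
    and Kneg: "x \<in> K \<Longrightarrow> - x \<in> K" for x y
    using assms unfolding is_subfield_def by auto
  show "x \<in> K \<Longrightarrow> y \<in> K \<Longrightarrow> x - y \<in> K"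
    using Kadd Kneg by (metis diff_conv_add_uminus)
  have Kinv: "y \<in> K \<Longrightarrow> inverse y \<in> K" for y
    using assms K0 unfolding is_subfield_def by (metis inverse_zero)
  show "x \<in> K \<Longrightarrow> y \<in> K \<Longrightarrow> x / y \<in> K"
    using Kmult Kinv by (simp add: divide_inverse)
  show "x \<in> K \<Longrightarrow> x ^ n \<in> K" using K1 Kmult by (induct n) auto
  show "numeral m \<in> K"
    by (induct m) (simp_all only: numeral.simps K1 Kadd)
qed

lemma subfield_coordinates_unique:
  assumes K: "is_subfield K" and "\<theta> \<notin> K"
    and "x0 \<in> K" "x1 \<in> K" "y0 \<in> K" "y1 \<in> K"
    and eq: "x0 + x1 * \<theta> = y0 + y1 * (\<theta>::'a::field)"
  shows "x0 = y0" and "x1 = y1"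
proof -
  show "x1 = y1"
  proof (rule ccontr)
    assume "x1 \<noteq> y1"
    with eq have "\<theta> = (y0 - x0) / (x1 - y1)" by (simp add: field_simps)
    moreover have "(y0 - x0) / (x1 - y1) \<in> K" using assms by (simp add: subfield_closed)
    ultimately show False using \<open>\<theta> \<notin> K\<close> by simp
  qed
  with eq show "x0 = y0" by simp
qed

definition X_point :: "'a::field \<Rightarrow> 'a \<Rightarrow> 'a \<Rightarrow> 'a \<Rightarrow> 'a \<Rightarrow> 'a \<times> 'a" where
  "X_point \<theta> \<mu>1 s0 s1 t0 = (s0 + s1 * \<theta>, t0 + (4 * s1 * s0 + 2 * s1^2 * \<mu>1) * \<theta>)"

lemma X_set_eq: "X_set K \<theta> \<mu>1 = {X_point \<theta> \<mu>1 s0 s1 t0 | s0 s1 t0. s0 \<in> K \<and> s1 \<in> K \<and> t0 \<in> K}"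
  unfolding X_set_def X_point_def by simp

lemma square_in_basis:
  fixes \<theta> :: "'a::field"
  assumes "\<theta>^2 = \<mu>1 * \<theta> + \<mu>0"
  shows "(x0 + x1 * \<theta>)^2 = (x0^2 + \<mu>0 * x1^2) + (2 * x0 * x1 + \<mu>1 * x1^2) * \<theta>"
proof -
  have "(x0 + x1 * \<theta>)^2 = x0^2 + 2 * x0 * x1 * \<theta> + x1^2 * \<theta>^2"
    by (simp add: power2_eq_square algebra_simps)
  then show ?thesis unfolding assms by (simp add: algebra_simps)
qed

text \<open>Comparing coordinates in the adjacency equation of two points of \<open>X\<close>: the third
  parameter of a neighbour is determined by the other two, which satisfy a product
  equation splitting into two linear conditions.\<close>
lemma X_adjacency_coordinates:
  fixes \<theta> :: "'a::field"
  assumes K: "is_subfield K" and "\<theta> \<notin> K" and "\<mu>0 \<in> K" "\<mu>1 \<in> K"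
    and \<theta>: "\<theta>^2 = \<mu>1 * \<theta> + \<mu>0"
    and "a0 \<in> K" "a1 \<in> K" "b0 \<in> K" "s0 \<in> K" "s1 \<in> K" "t0 \<in> K"
    and adj: "G_adj (X_point \<theta> \<mu>1 a0 a1 b0) (X_point \<theta> \<mu>1 s0 s1 t0)"
  shows "t0 = (a0 + s0)^2 + \<mu>0 * (a1 + s1)^2 - b0"
    and "(a1 - s1) * (2 * (a0 - s0) + \<mu>1 * (a1 - s1)) = 0"
proof -
  define Q where "Q = 2 * (a0 + s0) * (a1 + s1) + \<mu>1 * (a1 + s1)^2"
  define R where "R = 4 * a1 * a0 + 2 * a1^2 * \<mu>1 + (4 * s1 * s0 + 2 * s1^2 * \<mu>1)"
  have "(a0 + s0 + (a1 + s1) * \<theta>)^2 = (b0 + t0) + R * \<theta>"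
    using adj unfolding G_adj_def X_point_def R_def by (simp add: algebra_simps)
  then have eq: "((a0 + s0)^2 + \<mu>0 * (a1 + s1)^2) + Q * \<theta> = (b0 + t0) + R * \<theta>"
    unfolding square_in_basis[OF \<theta>] Q_def .
  have in_K: "(a0 + s0)^2 + \<mu>0 * (a1 + s1)^2 \<in> K" "Q \<in> K" "b0 + t0 \<in> K" "R \<in> K"
    unfolding Q_def R_def using assms by (simp_all add: subfield_closed)
  note coords = subfield_coordinates_unique[OF K \<open>\<theta> \<notin> K\<close> in_K eq]
  from coords(1) show "t0 = (a0 + s0)^2 + \<mu>0 * (a1 + s1)^2 - b0" by (simp add: algebra_simps)
  have "Q - R = - ((a1 - s1) * (2 * (a0 - s0) + \<mu>1 * (a1 - s1)))"
    unfolding Q_def R_def by (simp add: power2_eq_square algebra_simps)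
  with coords(2) show "(a1 - s1) * (2 * (a0 - s0) + \<mu>1 * (a1 - s1)) = 0" by simp
qed

lemma card_Un_overlapping:
  assumes "finite A" "finite B" "A \<inter> B \<noteq> {}"
  shows "card (A \<union> B) + 1 \<le> card A + card B"
proof -
  have "card (A \<inter> B) \<ge> 1" using assms by (simp add: Suc_le_eq card_gt_0_iff)
  then show ?thesis using card_Un_Int[OF assms(1,2)] by linarith
qed

text \<open>The degree bound for \<open>G[X]\<close> over any field with \<open>2 \<noteq> 0\<close> and any finite subfield
  \<open>K\<close>: the neighbours of \<open>X_point a0 a1 b0\<close> are parametrised by the two lines
  \<open>L1\<close> and \<open>L2\<close> of \<open>K\<^sup>2\<close> through \<open>(a0, a1)\<close>.\<close>
lemma degree_bound_X:
  fixes \<theta> :: "'a::field"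
  assumes K: "is_subfield K" "finite K" and two: "(2::'a) \<noteq> 0"
    and "\<theta> \<notin> K" and "\<mu>0 \<in> K" "\<mu>1 \<in> K" and \<theta>: "\<theta>^2 = \<mu>1 * \<theta> + \<mu>0"
    and v: "v \<in> X_set K \<theta> \<mu>1"
  shows "induced_degree (X_set K \<theta> \<mu>1) v \<le> 2 * card K - 1"
proof -
  obtain a0 a1 b0 where a: "a0 \<in> K" "a1 \<in> K" "b0 \<in> K" and v_eq: "v = X_point \<theta> \<mu>1 a0 a1 b0"
    using v unfolding X_set_eq by blast
  define nb where "nb = (\<lambda>(s0, s1). X_point \<theta> \<mu>1 s0 s1 ((a0 + s0)^2 + \<mu>0 * (a1 + s1)^2 - b0))"
  define L1 where "L1 = (\<lambda>s0. (s0, a1)) ` K"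
  define L2 where "L2 = (\<lambda>s1. (a0 + \<mu>1 * (a1 - s1) / 2, s1)) ` K"
  have neighbours: "{w \<in> X_set K \<theta> \<mu>1. G_adj v w} \<subseteq> nb ` (L1 \<union> L2)"
  proof
    fix w assume "w \<in> {w \<in> X_set K \<theta> \<mu>1. G_adj v w}"
    then obtain s0 s1 t0 where s: "s0 \<in> K" "s1 \<in> K" "t0 \<in> K"
      and w_eq: "w = X_point \<theta> \<mu>1 s0 s1 t0" and adj: "G_adj v w"
      unfolding X_set_eq by blast
    note coords = X_adjacency_coordinates[OF K(1) assms(4-7) a s adj[unfolded v_eq w_eq]]
    have "w = nb (s0, s1)" unfolding w_eq nb_def coords(1) by simp
    moreover have "(s0, s1) \<in> L1 \<union> L2"
    proof (cases "s1 = a1")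
      case True
      then show ?thesis unfolding L1_def using s by auto
    next
      case False
      with coords(2) have "2 * (a0 - s0) + \<mu>1 * (a1 - s1) = 0" by simp
      then have "s0 = a0 + \<mu>1 * (a1 - s1) / 2" using two by (simp add: field_simps)
      then show ?thesis unfolding L2_def using s by auto
    qed
    ultimately show "w \<in> nb ` (L1 \<union> L2)" by blast
  qed
  have finite_lines: "finite (L1 \<union> L2)" by (simp add: L1_def L2_def K(2))
  have card_L1: "card L1 = card K" unfolding L1_def by (rule card_image) (auto simp: inj_on_def)
  have card_L2: "card L2 \<le> card K" unfolding L2_def by (rule card_image_le[OF K(2)])
  have "(a0, a1) \<in> L1 \<inter> L2" unfolding L1_def L2_def using a by force
  then have "card (L1 \<union> L2) + 1 \<le> card L1 + card L2"
    using finite_lines by (intro card_Un_overlapping) auto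
  with card_L1 card_L2 have union_card: "card (L1 \<union> L2) \<le> 2 * card K - 1" by linarith
  have "induced_degree (X_set K \<theta> \<mu>1) v \<le> card (nb ` (L1 \<union> L2))"
    unfolding induced_degree_def using neighbours finite_lines by (intro card_mono) simp_all
  also have "\<dots> \<le> card (L1 \<union> L2)" by (rule card_image_le[OF finite_lines])
  finally show ?thesis using union_card by linarith
qed

theorem mainTheorem11:
  fixes K :: "'a::{field,finite} set" and q p k :: nat and \<theta> \<mu>0 \<mu>1 :: 'a
  assumes "prime p" and "odd p" and "k \<ge> 1" and "q = p ^ k"
    and "card (UNIV :: 'a set) = q ^ 2"
    and "is_subfield K" and "card K = q"
    and "\<theta> \<notin> K" and "\<mu>0 \<in> K" and "\<mu>1 \<in> K"
    and "\<theta>^2 = \<mu>1 * \<theta> + \<mu>0"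
  shows "\<forall>v \<in> X_set K \<theta> \<mu>1. induced_degree (X_set K \<theta> \<mu>1) v \<le> 2 * q - 1"
proof
  fix v assume "v \<in> X_set K \<theta> \<mu>1"
  have "odd (card (UNIV :: 'a set))" using assms(2,4,5) by simp
  then have "(2::'a) \<noteq> 0" by (rule two_neq_zero_if_odd_card)
  from degree_bound_X[OF assms(6) _ this assms(8-11) \<open>v \<in> X_set K \<theta> \<mu>1\<close>]
  show "induced_degree (X_set K \<theta> \<mu>1) v \<le> 2 * q - 1" using assms(7) by simp
qed

end
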